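(* Let $h>0$ and let $T^{\rm H}=\left[-\frac{\pi}{2},\frac{3\pi}{2}\right)^2\setminus\left[-\frac{\pi}{2},\frac{\pi}{2}\right)^2$. Let $\widetilde{A}_h(\boldsymbol\theta)=\frac{2}{h^2}(2-\cos\theta_1-\cos\theta_2)$ be the symbol of the 2D 5-point Laplacian stencil $\frac{1}{h^2}\begin{bmatrix} & -1 & \\ -1 & 4 & -1\\ & -1 & \end{bmatrix}$. For $\alpha,\beta,\gamma\in\mathbb R$ let $\Upsilon(\alpha,\beta,\gamma)=h^2\begin{bmatrix}\gamma&\beta&\gamma\\ \beta&\alpha&\beta\\ \gamma&\beta&\gamma\end{bmatrix}$ be the symmetric 9-point stencil with symbol $\widetilde{\Upsilon}(\boldsymbol\theta)=h^2(\alpha+2\beta\cos\theta_1+2\beta\cos\theta_2+4\gamma\cos\theta_1\cos\theta_2)$, and for $\omega\in\mathbb R$ define the smoothing factor $$\mu_{\rm loc}(\alpha,\beta,\gamma,\omega)=\max_{\boldsymbol\theta\in T^{\rm H}}\left|1-\omega\,\widetilde{A}_h(\boldsymbol\theta)\widetilde{\Upsilon}(\boldsymbol\theta)\right|.$$ Then among all symmetric 9-point stencils of the form $\Upsilon(\alpha,\beta,\gamma)$, the SPAI smoother $M_9=\frac{1}{24}\Upsilon(44,10,3)$ gives the optimal smoothing factor: $\min_{\alpha,\beta,\gamma,\omega\in\mathbb R}\mu_{\rm loc}(\alpha,\beta,\gamma,\omega)=\frac{9+8\sqrt{10}}{215}\approx0.1595$, and this minimum is attained for $(\alpha,\beta,\gamma)=(\frac{44}{24},\frac{10}{24},\frac{3}{24})$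 with the optimal relaxation parameter $\omega_{\rm opt}=\frac{309-12\sqrt{10}}{1720}\approx0.1576$.
   Context: This concerns the smoother (relaxation) $u^{k+1}=u^k+\omega M(b-Au^k)$ for the standard 5-point finite difference discretization $A_h$ of $-\Delta$ with mesh size $h$ in 2D, with relaxation error operator $I-\omega MA_h$. Its local Fourier (LFA) smoothing factor is the maximum over the high-frequency set $T^{\rm H}$ (for standard coarsening) of the modulus of the symbol $1-\omega\widetilde{A}_h(\boldsymbol\theta)\widetilde{M}(\boldsymbol\theta)$, where $\widetilde{M}$ is the symbol of the stencil $M$; the optimal smoothing factor is the minimum of this over the free parameters. *)

theory Defs
  imports Complex_Main
begin

definition TH :: "(real \<times> real) set" where
  "TH = ({-pi/2..<3*pi/2} \<times> {-pi/2..<3*pi/2}) - ({-pi/2..<pi/2} \<times> {-pi/2..<pi/2})"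

definition A_sym :: "real \<Rightarrow> real \<times> real \<Rightarrow> real" where
  "A_sym h \<theta> = 2 / h^2 * (2 - cos (fst \<theta>) - cos (snd \<theta>))"

definition Ups_sym :: "real \<Rightarrow> real \<Rightarrow> real \<Rightarrow> real \<Rightarrow> real \<times> real \<Rightarrow> real" where
  "Ups_sym h \<alpha> \<beta> \<gamma> \<theta> = h^2 * (\<alpha> + 2*\<beta>*cos (fst \<theta>) + 2*\<beta>*cos (snd \<theta>)
      + 4*\<gamma>*cos (fst \<theta>)*cos (snd \<theta>))"

definition mu_loc :: "real \<Rightarrow> real \<Rightarrow> real \<Rightarrow> real \<Rightarrow> real \<Rightarrow> real" where
  "mu_loc h \<alpha> \<beta> \<gamma> \<omega> = (SUP \<theta>\<in>TH. \<bar>1 - \<omega> * A_sym h \<theta> * Ups_sym h \<alpha> \<beta> \<gamma> \<theta>\<bar>)"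

end

theory Submission
  imports Defs
begin

(*
  With x = cos \<theta>\<^sub>1 and y = cos \<theta>\<^sub>2 the product of the two symbols is the polynomial
  2 (2 - x - y) (\<alpha> + 2\<beta> (x + y) + 4\<gamma> x y), independent of h, and T\<^sup>H is mapped onto the
  part of [-1, 1]\<^sup>2 where x \<le> 0 or y \<le> 0.

  Lower bound: whatever \<alpha>, \<beta>, \<gamma>, the value at a diagonal point (t, t), -1 \<le> t \<le> 0, is a
  nonnegative combination of the values at (0, 1), (-1, -1) and (-1, 1) with total weight
  S(t) = (1 - t)(11 + 10t + 3t\<^sup>2)/8. If |1 - \<omega> v| \<le> M at all four points, adding up gives
  S - 1 \<le> (S + 1) M. The bound (S - 1)/(S + 1) is best at the critical point
  t = (2 sqrt 10 - 7)/9 of S, where it equals (9 + 8 sqrt 10)/215.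

  Upper bound: for the SPAI stencil the polynomial equals 16/3 at the three corners, is at least
  16/3 on the whole region, and is at most 16/3 S((x + y)/2) \<le> 16/3 S(t). The given \<omega> makes
  1 - \<omega> 16/3 and \<omega> 16/3 S(t) - 1 both equal to (9 + 8 sqrt 10)/215.
*)

definition symbol_poly :: "real \<Rightarrow> real \<Rightarrow> real \<Rightarrow> real \<Rightarrow> real \<Rightarrow> real" where
  "symbol_poly \<alpha> \<beta> \<gamma> x y = 2 * (2 - x - y) * (\<alpha> + 2*\<beta>*x + 2*\<beta>*y + 4*\<gamma>*x*y)"

definition cos_TH :: "(real \<times> real) set" where
  "cos_TH = {(x, y). -1 \<le> x \<and> x \<le> 1 \<and> -1 \<le> y \<and> y \<le> 1 \<and> (x \<le> 0 \<or> y \<le> 0)}"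

lemma A_sym_mult_Ups_sym:
  assumes "h \<noteq> 0"
  shows "A_sym h \<theta> * Ups_sym h \<alpha> \<beta> \<gamma> \<theta> = symbol_poly \<alpha> \<beta> \<gamma> (cos (fst \<theta>)) (cos (snd \<theta>))"
  using assms unfolding A_sym_def Ups_sym_def symbol_poly_def by (simp add: field_simps)

lemma cos_nonpos: "pi/2 \<le> x \<Longrightarrow> x \<le> 3*pi/2 \<Longrightarrow> cos x \<le> 0"
  using cos_ge_zero[of "x - pi"] by (simp add: cos_diff)

lemma cos_image_TH: "(\<lambda>\<theta>. (cos (fst \<theta>), cos (snd \<theta>))) ` TH = cos_TH"
proof
  show "(\<lambda>\<theta>. (cos (fst \<theta>), cos (snd \<theta>))) ` TH \<subseteq> cos_TH"
  proof clarify
    fix a b assume "(a, b) \<in> TH"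
    then have "pi/2 \<le> a \<and> a \<le> 3*pi/2 \<or> pi/2 \<le> b \<and> b \<le> 3*pi/2"
      unfolding TH_def by auto
    then show "(cos (fst (a, b)), cos (snd (a, b))) \<in> cos_TH"
      unfolding cos_TH_def using cos_nonpos by auto
  qed
next
  show "cos_TH \<subseteq> (\<lambda>\<theta>. (cos (fst \<theta>), cos (snd \<theta>))) ` TH"
  proof clarify
    fix x y assume xy: "(x, y) \<in> cos_TH"
    then have bounds: "-1 \<le> x" "x \<le> 1" "-1 \<le> y" "y \<le> 1" and "x \<le> 0 \<or> y \<le> 0"
      unfolding cos_TH_def by auto
    then have "pi/2 \<le> arccos x \<or> pi/2 \<le> arccos y"
      using arccos_le_arccos[of x 0] arccos_le_arccos[of y 0] by auto
    moreover have "0 \<le> arccos x" "arccos x \<le> pi" "0 \<le> arccos y" "arccos y \<le> pi"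
      using bounds by (simp_all add: arccos_lbound arccos_ubound)
    then have "-pi/2 \<le> arccos x" "arccos x < 3*pi/2" "-pi/2 \<le> arccos y" "arccos y < 3*pi/2"
      using pi_gt_zero by linarith+
    ultimately have "(arccos x, arccos y) \<in> TH"
      unfolding TH_def by auto
    then show "(x, y) \<in> (\<lambda>\<theta>. (cos (fst \<theta>), cos (snd \<theta>))) ` TH"
      using bounds by (auto intro!: image_eqI[where x = "(arccos x, arccos y)"])
  qed
qed

lemma mu_loc_eq_SUP_cos_TH:
  assumes "h \<noteq> 0"
  shows "mu_loc h \<alpha> \<beta> \<gamma> \<omega> = (SUP (x, y)\<in>cos_TH. \<bar>1 - \<omega> * symbol_poly \<alpha> \<beta> \<gamma> x y\<bar>)"
  unfolding mu_loc_def cos_image_TH[symmetric] image_image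
  by (simp add: mult.assoc A_sym_mult_Ups_sym[OF assms])

lemma abs_symbol_poly_le:
  assumes "\<bar>x\<bar> \<le> 1" "\<bar>y\<bar> \<le> 1"
  shows "\<bar>symbol_poly \<alpha> \<beta> \<gamma> x y\<bar> \<le> 8 * (\<bar>\<alpha>\<bar> + 4*\<bar>\<beta>\<bar> + 4*\<bar>\<gamma>\<bar>)"
proof -
  have "\<bar>\<alpha> + 2*\<beta>*x + 2*\<beta>*y + 4*\<gamma>*x*y\<bar> \<le> \<bar>\<alpha>\<bar> + 2*\<bar>\<beta>\<bar>*\<bar>x\<bar> + 2*\<bar>\<beta>\<bar>*\<bar>y\<bar> + 4*\<bar>\<gamma>\<bar>*(\<bar>x\<bar>*\<bar>y\<bar>)"
    by (simp add: abs_mult[symmetric] abs_triangle_ineq order_trans[OF abs_triangle_ineq] add_mono mult.assoc)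
  also have "\<dots> \<le> \<bar>\<alpha>\<bar> + 4*\<bar>\<beta>\<bar> + 4*\<bar>\<gamma>\<bar>"
  proof -
    have "\<bar>\<beta>\<bar>*\<bar>x\<bar> \<le> \<bar>\<beta>\<bar>" "\<bar>\<beta>\<bar>*\<bar>y\<bar> \<le> \<bar>\<beta>\<bar>" "\<bar>\<gamma>\<bar>*(\<bar>x\<bar>*\<bar>y\<bar>) \<le> \<bar>\<gamma>\<bar>"
      using assms by (simp_all add: mult_left_le mult_le_one)
    then show ?thesis by linarith
  qed
  finally have "\<bar>\<alpha> + 2*\<beta>*x + 2*\<beta>*y + 4*\<gamma>*x*y\<bar> \<le> \<bar>\<alpha>\<bar> + 4*\<bar>\<beta>\<bar> + 4*\<bar>\<gamma>\<bar>" .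
  moreover have "\<bar>2 - x - y\<bar> \<le> 4"
    using assms by linarith
  ultimately have "\<bar>2 - x - y\<bar> * \<bar>\<alpha> + 2*\<beta>*x + 2*\<beta>*y + 4*\<gamma>*x*y\<bar> \<le> 4 * (\<bar>\<alpha>\<bar> + 4*\<bar>\<beta>\<bar> + 4*\<bar>\<gamma>\<bar>)"
    by (intro mult_mono) auto
  then show ?thesis
    unfolding symbol_poly_def abs_mult by simp
qed

lemma bdd_above_cos_TH:
  "bdd_above ((\<lambda>(x, y). \<bar>1 - \<omega> * symbol_poly \<alpha> \<beta> \<gamma> x y\<bar>) ` cos_TH)"
proof (rule bdd_aboveI2, clarify)
  fix x y assume "(x, y) \<in> cos_TH"
  then have "\<bar>symbol_poly \<alpha> \<beta> \<gamma> x y\<bar> \<le> 8 * (\<bar>\<alpha>\<bar> + 4*\<bar>\<beta>\<bar> + 4*\<bar>\<gamma>\<bar>)"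
    unfolding cos_TH_def by (intro abs_symbol_poly_le) auto
  then have "\<bar>\<omega> * symbol_poly \<alpha> \<beta> \<gamma> x y\<bar> \<le> \<bar>\<omega>\<bar> * (8 * (\<bar>\<alpha>\<bar> + 4*\<bar>\<beta>\<bar> + 4*\<bar>\<gamma>\<bar>))"
    by (simp add: abs_mult mult_left_mono)
  then show "\<bar>1 - \<omega> * symbol_poly \<alpha> \<beta> \<gamma> x y\<bar> \<le> 1 + \<bar>\<omega>\<bar> * (8 * (\<bar>\<alpha>\<bar> + 4*\<bar>\<beta>\<bar> + 4*\<bar>\<gamma>\<bar>))"
    by linarith
qed

lemma abs_le_mu_loc:
  assumes "h \<noteq> 0" "(x, y) \<in> cos_TH"
  shows "\<bar>1 - \<omega> * symbol_poly \<alpha> \<beta> \<gamma> x y\<bar> \<le> mu_loc h \<alpha> \<beta> \<gamma> \<omega>"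
  unfolding mu_loc_eq_SUP_cos_TH[OF assms(1)]
  using cSUP_upper[OF assms(2) bdd_above_cos_TH] by simp

lemma mu_loc_le:
  assumes "h \<noteq> 0" "\<And>x y. (x, y) \<in> cos_TH \<Longrightarrow> \<bar>1 - \<omega> * symbol_poly \<alpha> \<beta> \<gamma> x y\<bar> \<le> M"
  shows "mu_loc h \<alpha> \<beta> \<gamma> \<omega> \<le> M"
proof -
  have "(0, 0) \<in> cos_TH"
    unfolding cos_TH_def by simp
  then show ?thesis
    unfolding mu_loc_eq_SUP_cos_TH[OF assms(1)] using assms(2) by (intro cSUP_least) auto
qed

lemma symbol_poly_commute: "symbol_poly \<alpha> \<beta> \<gamma> x y = symbol_poly \<alpha> \<beta> \<gamma> y x"
  unfolding symbol_poly_def by (simp add: algebra_simps)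

definition weight_sum :: "real \<Rightarrow> real" where
  "weight_sum t = (1 - t) * (11 + 10*t + 3*t^2) / 8"

lemma symbol_poly_diag_combination:
  "symbol_poly \<alpha> \<beta> \<gamma> t t =
      (1 - t) * (1 + t)^2 * symbol_poly \<alpha> \<beta> \<gamma> 0 1
    + (1 - t)^3 / 8 * symbol_poly \<alpha> \<beta> \<gamma> (-1) (-1)
    + (1 - t) * (1 - 3*t) * (1 + t) / 4 * symbol_poly \<alpha> \<beta> \<gamma> (-1) 1"
  unfolding symbol_poly_def by (simp add: power2_eq_square power3_eq_cube field_simps)

lemma diag_weights_sum:
  "(1 - t) * (1 + t)^2 + (1 - t)^3 / 8 + (1 - t) * (1 - 3*t) * (1 + t) / 4 = weight_sum t"
  unfolding weight_sum_def by (simp add: power2_eq_square power3_eq_cube field_simps)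

lemma conic_combination_abs_bound:
  fixes l1 l2 l3 z1 z2 z3 M :: real
  assumes "0 \<le> l1" "0 \<le> l2" "0 \<le> l3"
    and "\<bar>1 - z1\<bar> \<le> M" "\<bar>1 - z2\<bar> \<le> M" "\<bar>1 - z3\<bar> \<le> M"
    and "\<bar>1 - (l1*z1 + l2*z2 + l3*z3)\<bar> \<le> M"
  shows "l1 + l2 + l3 - 1 \<le> (l1 + l2 + l3 + 1) * M"
proof -
  have "l1 * (1 - z1) \<le> l1 * M" "l2 * (1 - z2) \<le> l2 * M" "l3 * (1 - z3) \<le> l3 * M"
    using assms by (auto intro!: mult_left_mono)
  then show ?thesis
    using assms(7) by (simp add: algebra_simps)
qed

lemma mu_loc_ge_weight_sum:
  assumes "h \<noteq> 0" "-1 \<le> t" "t \<le> 0"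
  shows "(weight_sum t - 1) / (weight_sum t + 1) \<le> mu_loc h \<alpha> \<beta> \<gamma> \<omega>"
proof -
  define z where "z x y = \<omega> * symbol_poly \<alpha> \<beta> \<gamma> x y" for x y
  define M where "M = mu_loc h \<alpha> \<beta> \<gamma> \<omega>"
  have bound: "\<bar>1 - z x y\<bar> \<le> M" if "(x, y) \<in> cos_TH" for x y
    unfolding z_def M_def using assms(1) that by (rule abs_le_mu_loc)
  have "(0, 1) \<in> cos_TH" "(-1, -1) \<in> cos_TH" "(-1, 1) \<in> cos_TH" "(t, t) \<in> cos_TH"
    using assms unfolding cos_TH_def by auto
  note corners = this[THEN bound]
  have "z t t = (1 - t) * (1 + t)^2 * z 0 1 + (1 - t)^3 / 8 * z (-1) (-1)
      + (1 - t) * (1 - 3*t) * (1 + t) / 4 * z (-1) 1"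
    unfolding z_def symbol_poly_diag_combination[of _ _ _ t] by (simp add: algebra_simps)
  then have diag: "\<bar>1 - ((1 - t) * (1 + t)^2 * z 0 1 + (1 - t)^3 / 8 * z (-1) (-1)
      + (1 - t) * (1 - 3*t) * (1 + t) / 4 * z (-1) 1)\<bar> \<le> M"
    using corners(4) by simp
  have weights: "0 \<le> (1 - t) * (1 + t)^2" "0 \<le> (1 - t)^3 / 8"
      "0 \<le> (1 - t) * (1 - 3*t) * (1 + t) / 4"
    using assms by simp_all
  have "weight_sum t - 1 \<le> (weight_sum t + 1) * M"
    unfolding diag_weights_sum[symmetric]
    by (rule conic_combination_abs_bound[OF weights corners(1-3) diag])
  moreover have "0 < weight_sum t + 1"
    using weights unfolding diag_weights_sum[symmetric] by linarith
  ultimately show ?thesis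
    unfolding M_def by (simp add: pos_divide_le_eq mult.commute)
qed

lemma weight_sum_le_critical:
  assumes "9*t^2 + 14*t + 1 = 0" "-2/3 \<le> t" "-1 \<le> s"
  shows "weight_sum s \<le> weight_sum t"
proof -
  have "8 * (weight_sum t - weight_sum s) = (s - t)^2 * (3*s + 6*t + 7) + (s - t) * (9*t^2 + 14*t + 1)"
    unfolding weight_sum_def by (simp add: power2_eq_square power3_eq_cube field_simps)
  moreover have "0 \<le> (s - t)^2 * (3*s + 6*t + 7)"
    using assms(2,3) by simp
  ultimately show ?thesis
    using assms(1) by simp
qed

lemma weight_sum_critical:
  assumes "9*t^2 + 14*t + 1 = 0"
  shows "weight_sum t = 2 * (19 + 5*t) / 27"
proof -
  have "weight_sum t = 2 * (19 + 5*t) / 27 - (9*t + 7) * (9*t^2 + 14*t + 1) / 216"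
    unfolding weight_sum_def by (simp add: power2_eq_square power3_eq_cube field_simps)
  then show ?thesis
    using assms by simp
qed

abbreviation symbol_poly_SPAI :: "real \<Rightarrow> real \<Rightarrow> real" where
  "symbol_poly_SPAI \<equiv> symbol_poly (44/24) (10/24) (3/24)"

lemma symbol_poly_SPAI_eq:
  "symbol_poly_SPAI x y = 16/3 * weight_sum ((x + y) / 2) - (1 - (x + y) / 2) * (x - y)^2 / 2"
  unfolding symbol_poly_def weight_sum_def by (simp add: power2_eq_square power3_eq_cube field_simps)

lemma symbol_poly_SPAI_le:
  assumes "x \<le> 1" "y \<le> 1"
  shows "symbol_poly_SPAI x y \<le> 16/3 * weight_sum ((x + y) / 2)"
proof -
  have "0 \<le> (1 - (x + y) / 2) * (x - y)^2 / 2"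
    using assms by simp
  then show ?thesis
    unfolding symbol_poly_SPAI_eq by linarith
qed

lemma symbol_poly_SPAI_ge_of_nonpos:
  assumes "-1 \<le> x" "x \<le> 0" "-1 \<le> y" "y \<le> 1"
  shows "16/3 \<le> symbol_poly_SPAI x y"
proof -
  have certificate: "3/8 * (symbol_poly_SPAI x y - 16/3) = (1 + y) * (-x) * (1 + x) / 2
      + (1 - y) * (1 - x) * (1 + x) / 8 + (5 + 3*x) * (1 - y) * (1 + y) / 8"
    unfolding symbol_poly_def by (simp add: field_simps)
  have "0 \<le> (1 + y) * (-x) * (1 + x) / 2" "0 \<le> (1 - y) * (1 - x) * (1 + x) / 8"
      "0 \<le> (5 + 3*x) * (1 - y) * (1 + y) / 8"
    using assms by (intro divide_nonneg_nonneg mult_nonneg_nonneg; simp)+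
  then have "0 \<le> 3/8 * (symbol_poly_SPAI x y - 16/3)"
    unfolding certificate by (intro add_nonneg_nonneg)
  then show ?thesis
    by simp
qed

lemma symbol_poly_SPAI_ge:
  assumes "(x, y) \<in> cos_TH"
  shows "16/3 \<le> symbol_poly_SPAI x y"
  using assms symbol_poly_SPAI_ge_of_nonpos[of x y] symbol_poly_SPAI_ge_of_nonpos[of y x]
  unfolding cos_TH_def by (auto simp: symbol_poly_commute)

lemma mu_loc_SPAI_le:
  assumes "h \<noteq> 0" "0 \<le> \<omega>" "9*t^2 + 14*t + 1 = 0" "-2/3 \<le> t"
  shows "mu_loc h (44/24) (10/24) (3/24) \<omega>
    \<le> max \<bar>1 - 16/3 * \<omega>\<bar> \<bar>1 - 16/3 * \<omega> * weight_sum t\<bar>"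
proof (rule mu_loc_le[OF assms(1)])
  fix x y assume xy: "(x, y) \<in> cos_TH"
  then have "16/3 \<le> symbol_poly_SPAI x y"
    by (rule symbol_poly_SPAI_ge)
  moreover have "symbol_poly_SPAI x y \<le> 16/3 * weight_sum t"
  proof -
    have "symbol_poly_SPAI x y \<le> 16/3 * weight_sum ((x + y) / 2)"
      using xy unfolding cos_TH_def by (intro symbol_poly_SPAI_le) auto
    also have "\<dots> \<le> 16/3 * weight_sum t"
      using xy assms(3,4) unfolding cos_TH_def by (auto intro!: weight_sum_le_critical)
    finally show ?thesis .
  qed
  ultimately have "\<omega> * (16/3) \<le> \<omega> * symbol_poly_SPAI x y"
      "\<omega> * symbol_poly_SPAI x y \<le> \<omega> * (16/3 * weight_sum t)"
    using assms(2) by (simp_all only: mult_left_mono)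
  then show "\<bar>1 - \<omega> * symbol_poly_SPAI x y\<bar> \<le> max \<bar>1 - 16/3 * \<omega>\<bar> \<bar>1 - 16/3 * \<omega> * weight_sum t\<bar>"
    by linarith
qed

lemma critical_point_sqrt10:
  defines "t \<equiv> (2 * sqrt 10 - 7) / 9"
  shows "9*t^2 + 14*t + 1 = 0" "-2/3 \<le> t" "t \<le> 0"
    and "weight_sum t = (272 + 20 * sqrt 10) / 243"
proof -
  have "3 < sqrt 10"
    by (rule real_less_rsqrt) simp
  moreover have "sqrt 10 < 7/2"
    by (rule real_less_lsqrt) (simp_all add: power2_eq_square)
  ultimately show "-2/3 \<le> t" "t \<le> 0"
    unfolding t_def by simp_all
  show quadratic: "9*t^2 + 14*t + 1 = 0"
    unfolding t_def by (simp add: power2_eq_square field_simps)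
  show "weight_sum t = (272 + 20 * sqrt 10) / 243"
    using weight_sum_critical[OF quadratic] unfolding t_def by (simp add: field_simps)
qed

theorem theorem3p1:
  fixes h :: real
  assumes "h > 0"
  shows "(\<forall>\<alpha> \<beta> \<gamma> \<omega>. mu_loc h \<alpha> \<beta> \<gamma> \<omega> \<ge> (9 + 8 * sqrt 10) / 215)
     \<and> mu_loc h (44/24) (10/24) (3/24) ((309 - 12 * sqrt 10) / 1720) = (9 + 8 * sqrt 10) / 215"
proof -
  define t where "t = (2 * sqrt 10 - 7) / 9"
  define \<mu> where "\<mu> = (9 + 8 * sqrt 10) / 215"
  define \<omega> where "\<omega> = (309 - 12 * sqrt 10) / 1720"
  note t = critical_point_sqrt10[folded t_def]
  have "0 < 515 + 20 * sqrt 10"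
    by (simp add: add_pos_nonneg)
  then have "(weight_sum t - 1) / (weight_sum t + 1) = \<mu>"
    unfolding t(4) \<mu>_def by (simp add: field_simps)
  then have lower: "\<mu> \<le> mu_loc h \<alpha> \<beta> \<gamma> \<omega>'" for \<alpha> \<beta> \<gamma> \<omega>'
    using mu_loc_ge_weight_sum[of h t] assms t by simp
  have "1 - 16/3 * \<omega> = \<mu>" "16/3 * \<omega> * weight_sum t - 1 = \<mu>" "0 \<le> \<mu>"
    unfolding t(4) \<mu>_def \<omega>_def by (simp_all add: field_simps)
  moreover have "0 \<le> \<omega>"
    using t(3) unfolding t_def \<omega>_def by simp
  ultimately have "mu_loc h (44/24) (10/24) (3/24) \<omega> \<le> \<mu>"
    using mu_loc_SPAI_le[of h \<omega> t] assms t by (simp add: abs_minus_commute)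
  then show ?thesis
    using lower unfolding \<mu>_def \<omega>_def by (auto intro: order.antisym)
qed

end
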